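(* Let $\mathcal H$ be an infinite-dimensional separable Hilbert space with orthonormal basis $\{|\varphi_i\rangle\}_{i=1}^\infty$, and let $\big[\langle\varphi_i|\hat\varrho|\varphi_j\rangle\big]_{i,j=1}^{\infty}$ be an infinite complex matrix. This matrix represents a quantum state (i.e. is the matrix of a density operator in this basis) if and only if: (i) $\sum_{i,j=1}^{\infty}|\langle\varphi_i|\hat\varrho|\varphi_j\rangle|^2\le 1$; (ii) $\langle\varphi_i|\hat\varrho|\varphi_j\rangle=\overline{\langle\varphi_j|\hat\varrho|\varphi_i\rangle}$ for all $1\le i,j<\infty$; (iii) for every natural number $n$, \[\sum_{k=0}^{n}(-1)^k\binom{n}{k}\sum_{i=1}^{\infty}\langle\varphi_i|\hat\varrho^{k+1}|\varphi_i\rangle\ge 0;\] (iv) $\sum_{i=1}^{\infty}\langle\varphi_i|\hat\varrho|\varphi_i\rangle=1$.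
   Context: A density operator on $\mathcal H$ is an operator $\hat\varrho:\mathcal H\to\mathcal H$ defined on all of $\mathcal H$ which is positive, self-adjoint, and has trace $1$. When condition (i) holds, the matrix defines a unique Hilbert–Schmidt operator $\hat\varrho$ on $\mathcal H$ with the given matrix elements; powers refer to this operator. *)

theory Defs
  imports "HOL-Analysis.Analysis" "HOL-Library.Complex_Order"
begin

text \<open>The separable infinite-dimensional Hilbert space is modelled concretely as
  l2(nat): square-summable complex sequences, with orthonormal basis given by the
  unit vectors (index i = 0,1,2,... corresponds to phi_(i+1)).\<close>

definition l2 :: "(nat \<Rightarrow> complex) set" where
  "l2 = {x. summable (\<lambda>n. (cmod (x n))\<^sup>2)}"

definition l2_inner :: "(nat \<Rightarrow> complex) \<Rightarrow> (nat \<Rightarrow> complex) \<Rightarrow> complex" where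
  "l2_inner x y = (\<Sum>n. cnj (x n) * y n)"

definition basis_vec :: "nat \<Rightarrow> nat \<Rightarrow> complex" where
  "basis_vec i = (\<lambda>j. if j = i then 1 else 0)"

definition density_operator :: "((nat \<Rightarrow> complex) \<Rightarrow> (nat \<Rightarrow> complex)) \<Rightarrow> bool" where
  "density_operator A \<longleftrightarrow>
     (\<forall>x\<in>l2. A x \<in> l2) \<and>
     (\<forall>x\<in>l2. \<forall>y\<in>l2. \<forall>a b. A (\<lambda>n. a * x n + b * y n) = (\<lambda>n. a * A x n + b * A y n)) \<and>
     (\<forall>x\<in>l2. \<forall>y\<in>l2. l2_inner (A x) y = l2_inner x (A y)) \<and>
     (\<forall>x\<in>l2. 0 \<le> l2_inner x (A x)) \<and>
     (\<lambda>i. l2_inner (basis_vec i) (A (basis_vec i))) sums 1"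

definition represents_state :: "(nat \<Rightarrow> nat \<Rightarrow> complex) \<Rightarrow> bool" where
  "represents_state M \<longleftrightarrow>
     (\<exists>A. density_operator A \<and>
          (\<forall>i j. l2_inner (basis_vec i) (A (basis_vec j)) = M i j))"

definition matrix_op :: "(nat \<Rightarrow> nat \<Rightarrow> complex) \<Rightarrow> (nat \<Rightarrow> complex) \<Rightarrow> (nat \<Rightarrow> complex)" where
  "matrix_op M x = (\<lambda>i. \<Sum>j. M i j * x j)"

definition pow_diag :: "(nat \<Rightarrow> nat \<Rightarrow> complex) \<Rightarrow> nat \<Rightarrow> nat \<Rightarrow> complex" where
  "pow_diag M k i = l2_inner (basis_vec i) ((matrix_op M ^^ k) (basis_vec i))"

end

theory Submission
  imports Defs
begin

text \<open>
  Forward direction: Cauchy--Schwarz for the positive form \<open>\<langle>x, A y\<rangle>\<close>, summed over the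
  basis against the diagonal \<open>\<langle>e i, A e i\<rangle>\<close> of trace \<open>1\<close>, gives \<open>\<parallel>A x\<parallel>\<^sup>2 \<le> \<langle>x, A x\<rangle>\<close>.
  Hence \<open>\<Sum>i j. \<bar>M i j\<bar>\<^sup>2 = \<Sum>i. \<parallel>A e i\<parallel>\<^sup>2 \<le> tr A = 1\<close> and \<open>\<parallel>A\<parallel> \<le> 1\<close>, and the alternating
  binomial sum in (iii) is \<open>tr (A (1 - A)^n)\<close>, which is nonnegative because \<open>A (1 - A)^n\<close> is
  a positive operator.

  Backward direction: the Hilbert--Schmidt bound makes \<open>M\<close> the matrix of a self-adjoint
  contraction \<open>A\<close>, so \<open>C = 1 - A\<close> is positive. If \<open>\<langle>x, A x\<rangle> = -d \<parallel>x\<parallel>\<^sup>2 < 0\<close>, then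
  \<open>\<parallel>C x\<parallel>\<^sup>2 \<ge> (1 + d)\<^sup>2 \<parallel>x\<parallel>\<^sup>2\<close>; log-convexity of \<open>k \<mapsto> \<parallel>C^k x\<parallel>\<^sup>2\<close> keeps this ratio along
  the orbit, so \<open>\<parallel>A C^m x\<parallel>\<^sup>2 \<ge> d\<^sup>2 (1 + d)^(2m) \<parallel>x\<parallel>\<^sup>2\<close> grows without bound. But telescoping
  gives \<open>tr A - tr (A C^(2m+1)) = (\<Sum>j\<le>2m. tr (C^j A\<^sup>2)) \<ge> \<Sum>i. \<parallel>C^m A e i\<parallel>\<^sup>2\<close>, so (iii) and (iv)
  force \<open>\<Sum>i. \<parallel>C^m A e i\<parallel>\<^sup>2 \<le> 1\<close>, and then \<open>\<parallel>A C^m x\<parallel>\<^sup>2 \<le> \<parallel>x\<parallel>\<^sup>2\<close> by Cauchy--Schwarz.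
\<close>

section \<open>The sequence space l2\<close>

definition l2_normsq :: "(nat \<Rightarrow> complex) \<Rightarrow> real" where
  "l2_normsq x = (\<Sum>n. (cmod (x n))\<^sup>2)"

lemma in_l2_iff: "x \<in> l2 \<longleftrightarrow> summable (\<lambda>n. (cmod (x n))\<^sup>2)"
  by (simp add: l2_def)

lemma l2_normsq_sums: "x \<in> l2 \<Longrightarrow> (\<lambda>n. (cmod (x n))\<^sup>2) sums l2_normsq x"
  unfolding in_l2_iff l2_normsq_def by (rule summable_sums)

lemma l2_normsq_nonneg: "x \<in> l2 \<Longrightarrow> 0 \<le> l2_normsq x"
  unfolding l2_normsq_def in_l2_iff by (simp add: suminf_nonneg)

lemma l2_lin_comb:
  assumes "x \<in> l2" "y \<in> l2"
  shows "(\<lambda>n. a * x n + b * y n) \<in> l2"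
  unfolding in_l2_iff
proof (rule summable_comparison_test')
  show "summable (\<lambda>n. 2 * (cmod a)\<^sup>2 * (cmod (x n))\<^sup>2 + 2 * (cmod b)\<^sup>2 * (cmod (y n))\<^sup>2)"
    using assms unfolding in_l2_iff by (intro summable_add summable_mult)
  fix n
  have "cmod (a * x n + b * y n) \<le> cmod a * cmod (x n) + cmod b * cmod (y n)"
    by (metis norm_mult norm_triangle_ineq)
  hence "(cmod (a * x n + b * y n))\<^sup>2 \<le> (cmod a * cmod (x n) + cmod b * cmod (y n))\<^sup>2"
    by (simp add: power_mono)
  also have "\<dots> \<le> 2 * (cmod a)\<^sup>2 * (cmod (x n))\<^sup>2 + 2 * (cmod b)\<^sup>2 * (cmod (y n))\<^sup>2"
    using sum_squares_bound[of "cmod a * cmod (x n)" "cmod b * cmod (y n)"]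
    by (simp add: power2_sum power_mult_distrib)
  finally show "norm ((cmod (a * x n + b * y n))\<^sup>2)
      \<le> 2 * (cmod a)\<^sup>2 * (cmod (x n))\<^sup>2 + 2 * (cmod b)\<^sup>2 * (cmod (y n))\<^sup>2"
    by simp
qed

lemma l2_diff_scaled: "x \<in> l2 \<Longrightarrow> y \<in> l2 \<Longrightarrow> (\<lambda>n. x n - s * y n) \<in> l2"
  using l2_lin_comb[of x y 1 "-s"] by simp

lemma l2_diff: "x \<in> l2 \<Longrightarrow> y \<in> l2 \<Longrightarrow> (\<lambda>n. x n - y n) \<in> l2"
  using l2_diff_scaled[of x y 1] by simp

lemma basis_vec_in_l2: "basis_vec i \<in> l2"
proof -
  have "(\<lambda>n. (cmod (basis_vec i n))\<^sup>2) = (\<lambda>n. if n = i then 1 else 0)"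
    by (auto simp: basis_vec_def)
  thus ?thesis unfolding in_l2_iff by (simp add: summable_single)
qed

lemma l2_inner_abs_summable:
  assumes "x \<in> l2" "y \<in> l2"
  shows "summable (\<lambda>n. cmod (cnj (x n) * y n))"
proof (rule summable_comparison_test')
  show "summable (\<lambda>n. (cmod (x n))\<^sup>2 + (cmod (y n))\<^sup>2)"
    using assms by (simp add: in_l2_iff summable_add)
  fix n
  have "cmod (x n) * cmod (y n) \<le> (cmod (x n))\<^sup>2 + (cmod (y n))\<^sup>2"
    using sum_squares_bound[of "cmod (x n)" "cmod (y n)"]
      mult_nonneg_nonneg[OF norm_ge_zero norm_ge_zero, of "x n" "y n"]
    by linarith
  thus "norm (cmod (cnj (x n) * y n)) \<le> (cmod (x n))\<^sup>2 + (cmod (y n))\<^sup>2"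
    by (simp add: norm_mult)
qed

lemma l2_inner_sums: "x \<in> l2 \<Longrightarrow> y \<in> l2 \<Longrightarrow> (\<lambda>n. cnj (x n) * y n) sums l2_inner x y"
  unfolding l2_inner_def by (rule summable_sums[OF summable_norm_cancel[OF l2_inner_abs_summable]])

lemma l2_inner_lin_comb_right:
  assumes "w \<in> l2" "x \<in> l2" "y \<in> l2"
  shows "l2_inner w (\<lambda>n. a * x n + b * y n) = a * l2_inner w x + b * l2_inner w y"
proof -
  have "(\<lambda>n. a * (cnj (w n) * x n) + b * (cnj (w n) * y n)) sums (a * l2_inner w x + b * l2_inner w y)"
    using assms by (intro sums_add sums_mult l2_inner_sums)
  thus ?thesis unfolding l2_inner_def by (simp add: sums_iff algebra_simps)
qed

lemma l2_inner_commute: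
  assumes "x \<in> l2" "y \<in> l2"
  shows "l2_inner y x = cnj (l2_inner x y)"
proof -
  have "(\<lambda>n. cnj (cnj (x n) * y n)) sums cnj (l2_inner x y)"
    using l2_inner_sums[OF assms] by (simp only: sums_cnj)
  thus ?thesis by (simp add: l2_inner_def sums_iff mult.commute)
qed

lemma l2_inner_lin_comb_left:
  assumes "w \<in> l2" "x \<in> l2" "y \<in> l2"
  shows "l2_inner (\<lambda>n. a * x n + b * y n) w = cnj a * l2_inner x w + cnj b * l2_inner y w"
proof -
  have "l2_inner (\<lambda>n. a * x n + b * y n) w = cnj (l2_inner w (\<lambda>n. a * x n + b * y n))"
    using assms(1) l2_lin_comb[OF assms(2,3)] by (rule l2_inner_commute)
  also have "\<dots> = cnj a * cnj (l2_inner w x) + cnj b * cnj (l2_inner w y)"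
    using assms by (simp add: l2_inner_lin_comb_right)
  finally show ?thesis
    using l2_inner_commute[OF assms(1,2)] l2_inner_commute[OF assms(1,3)] by simp
qed

lemma l2_inner_diff_scaled_right:
  "w \<in> l2 \<Longrightarrow> x \<in> l2 \<Longrightarrow> y \<in> l2 \<Longrightarrow>
    l2_inner w (\<lambda>n. x n - s * y n) = l2_inner w x - s * l2_inner w y"
  using l2_inner_lin_comb_right[of w x y 1 "-s"] by simp

lemma l2_inner_diff_scaled_left:
  "w \<in> l2 \<Longrightarrow> x \<in> l2 \<Longrightarrow> y \<in> l2 \<Longrightarrow>
    l2_inner (\<lambda>n. x n - s * y n) w = l2_inner x w - cnj s * l2_inner y w"
  using l2_inner_lin_comb_left[of w x y 1 "-s"] by simp

lemma l2_inner_diff_right: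
  "w \<in> l2 \<Longrightarrow> x \<in> l2 \<Longrightarrow> y \<in> l2 \<Longrightarrow> l2_inner w (\<lambda>n. x n - y n) = l2_inner w x - l2_inner w y"
  using l2_inner_diff_scaled_right[of w x y 1] by simp

lemma l2_inner_diff_left:
  "w \<in> l2 \<Longrightarrow> x \<in> l2 \<Longrightarrow> y \<in> l2 \<Longrightarrow> l2_inner (\<lambda>n. x n - y n) w = l2_inner x w - l2_inner y w"
  using l2_inner_diff_scaled_left[of w x y 1] by simp

lemma l2_inner_self: "x \<in> l2 \<Longrightarrow> l2_inner x x = of_real (l2_normsq x)"
proof -
  assume x: "x \<in> l2"
  have "(\<lambda>n. complex_of_real ((cmod (x n))\<^sup>2)) sums of_real (l2_normsq x)"
    using l2_normsq_sums[OF x] by (simp only: sums_of_real_iff)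
  moreover have "complex_of_real ((cmod (x n))\<^sup>2) = cnj (x n) * x n" for n
    by (metis complex_norm_square mult.commute)
  ultimately show ?thesis by (simp add: l2_inner_def sums_iff)
qed

lemma l2_inner_basis_vec_left: "l2_inner (basis_vec i) v = v i"
proof -
  have "(\<lambda>n. cnj (basis_vec i n) * v n) = (\<lambda>n. if n = i then v i else 0)"
    by (auto simp: basis_vec_def)
  thus ?thesis unfolding l2_inner_def using sums_single[of i "\<lambda>_. v i"] by (simp add: sums_iff)
qed

lemma l2_inner_basis_vec_right: "l2_inner v (basis_vec i) = cnj (v i)"
proof -
  have "(\<lambda>n. cnj (v n) * basis_vec i n) = (\<lambda>n. if n = i then cnj (v i) else 0)"
    by (auto simp: basis_vec_def)
  thus ?thesis unfolding l2_inner_def using sums_single[of i "\<lambda>_. cnj (v i)"] by (simp add: sums_iff)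
qed

lemma l2_normsq_diff:
  assumes z: "z \<in> l2" and w: "w \<in> l2"
  shows "l2_normsq (\<lambda>n. z n - w n) = l2_normsq z - 2 * Re (l2_inner z w) + l2_normsq w"
proof -
  have d: "(\<lambda>n. z n - w n) \<in> l2" using z w by (rule l2_diff)
  have "of_real (l2_normsq (\<lambda>n. z n - w n)) = l2_inner (\<lambda>n. z n - w n) (\<lambda>n. z n - w n)"
    using d by (simp add: l2_inner_self)
  also have "\<dots> = l2_inner z (\<lambda>n. z n - w n) - l2_inner w (\<lambda>n. z n - w n)"
    using d z w by (rule l2_inner_diff_left)
  also have "l2_inner z (\<lambda>n. z n - w n) = l2_inner z z - l2_inner z w"
    using z z w by (rule l2_inner_diff_right)
  also have "l2_inner w (\<lambda>n. z n - w n) = l2_inner w z - l2_inner w w"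
    using w z w by (rule l2_inner_diff_right)
  also have "l2_inner w z = cnj (l2_inner z w)" using z w by (rule l2_inner_commute)
  finally have "of_real (l2_normsq (\<lambda>n. z n - w n))
      = of_real (l2_normsq z) - l2_inner z w - cnj (l2_inner z w) + of_real (l2_normsq w)"
    using z w by (simp add: l2_inner_self)
  from arg_cong[OF this, of Re] show ?thesis by simp
qed

section \<open>Operators on l2\<close>

definition l2_linear :: "((nat \<Rightarrow> complex) \<Rightarrow> (nat \<Rightarrow> complex)) \<Rightarrow> bool" where
  "l2_linear B \<longleftrightarrow> (\<forall>x\<in>l2. B x \<in> l2) \<and>
     (\<forall>x\<in>l2. \<forall>y\<in>l2. \<forall>a b. B (\<lambda>n. a * x n + b * y n) = (\<lambda>n. a * B x n + b * B y n))"

definition l2_selfadjoint :: "((nat \<Rightarrow> complex) \<Rightarrow> (nat \<Rightarrow> complex)) \<Rightarrow> bool" where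
  "l2_selfadjoint B \<longleftrightarrow> l2_linear B \<and> (\<forall>x\<in>l2. \<forall>y\<in>l2. l2_inner (B x) y = l2_inner x (B y))"

definition l2_positive :: "((nat \<Rightarrow> complex) \<Rightarrow> (nat \<Rightarrow> complex)) \<Rightarrow> bool" where
  "l2_positive B \<longleftrightarrow> (\<forall>x\<in>l2. 0 \<le> l2_inner x (B x))"

definition l2_contraction :: "((nat \<Rightarrow> complex) \<Rightarrow> (nat \<Rightarrow> complex)) \<Rightarrow> bool" where
  "l2_contraction B \<longleftrightarrow> (\<forall>x\<in>l2. l2_normsq (B x) \<le> l2_normsq x)"

lemma density_operator_iff:
  "density_operator A \<longleftrightarrow> l2_selfadjoint A \<and> l2_positive A \<and> (\<lambda>i. A (basis_vec i) i) sums 1"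
  unfolding density_operator_def l2_selfadjoint_def l2_linear_def l2_positive_def
    l2_inner_basis_vec_left by auto

lemma l2_linearD:
  "l2_linear B \<Longrightarrow> x \<in> l2 \<Longrightarrow> B x \<in> l2"
  "l2_linear B \<Longrightarrow> x \<in> l2 \<Longrightarrow> y \<in> l2 \<Longrightarrow> B (\<lambda>n. a * x n + b * y n) = (\<lambda>n. a * B x n + b * B y n)"
  unfolding l2_linear_def by blast+

lemma l2_selfadjointD:
  "l2_selfadjoint B \<Longrightarrow> l2_linear B"
  "l2_selfadjoint B \<Longrightarrow> x \<in> l2 \<Longrightarrow> y \<in> l2 \<Longrightarrow> l2_inner (B x) y = l2_inner x (B y)"
  unfolding l2_selfadjoint_def by blast+

lemma l2_linear_diff_scaled:
  "l2_linear B \<Longrightarrow> x \<in> l2 \<Longrightarrow> y \<in> l2 \<Longrightarrow> B (\<lambda>n. x n - s * y n) = (\<lambda>n. B x n - s * B y n)"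
  using l2_linearD(2)[of B x y 1 "-s"] by simp

lemma l2_linear_diff:
  "l2_linear B \<Longrightarrow> x \<in> l2 \<Longrightarrow> y \<in> l2 \<Longrightarrow> B (\<lambda>n. x n - y n) = (\<lambda>n. B x n - B y n)"
  using l2_linear_diff_scaled[of B x y 1] by simp

lemma l2_selfadjoint_id: "l2_selfadjoint (\<lambda>x. x)"
  unfolding l2_selfadjoint_def l2_linear_def by simp

lemma l2_positive_id: "l2_positive (\<lambda>x. x)"
  unfolding l2_positive_def by (simp add: l2_inner_self l2_normsq_nonneg less_eq_complex_def)

lemma l2_inner_selfadjoint_real:
  assumes "l2_selfadjoint B" "x \<in> l2"
  shows "Im (l2_inner x (B x)) = 0"
proof -
  have "l2_inner x (B x) = l2_inner (B x) x" using assms by (simp add: l2_selfadjointD)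
  also have "\<dots> = cnj (l2_inner x (B x))"
    using assms(2) l2_linearD(1)[OF l2_selfadjointD(1)[OF assms(1)] assms(2)] by (rule l2_inner_commute)
  finally show ?thesis by (metis cnj.sel(2) neg_equal_zero)
qed

lemma l2_positive_Re:
  "l2_selfadjoint B \<Longrightarrow> x \<in> l2 \<Longrightarrow> 0 \<le> l2_inner x (B x) \<longleftrightarrow> 0 \<le> Re (l2_inner x (B x))"
  using l2_inner_selfadjoint_real by (auto simp: less_eq_complex_def)

lemma quadratic_nonneg_imp_le:
  fixes a p r :: real
  assumes "\<And>t. 0 \<le> a - 2 * t * p + t\<^sup>2 * p * r" "0 \<le> p" "0 \<le> r"
  shows "p \<le> a * r"
proof (cases "p = 0")
  case True
  have "0 \<le> a - 2 * 0 * p + 0\<^sup>2 * p * r" by (rule assms(1))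
  with True assms show ?thesis by simp
next
  case False
  hence p: "p > 0" using assms by simp
  show ?thesis
  proof (cases "r = 0")
    case True
    have "0 \<le> a - 2 * ((a + 1) / (2 * p)) * p + ((a + 1) / (2 * p))\<^sup>2 * p * r" by (rule assms(1))
    also have "\<dots> = -1" using p True by (simp add: field_simps)
    finally show ?thesis by simp
  next
    case False
    hence r: "r > 0" using assms by simp
    have "0 \<le> a - 2 * (1 / r) * p + (1 / r)\<^sup>2 * p * r" by (rule assms(1))
    also have "\<dots> = a - p / r" using r by (simp add: field_simps power2_eq_square)
    finally show ?thesis using r by (simp add: field_simps)
  qed
qed

lemma positive_form_Cauchy_Schwarz:
  assumes B: "l2_selfadjoint B" "l2_positive B" and u: "u \<in> l2" and v: "v \<in> l2"
  shows "(cmod (l2_inner u (B v)))\<^sup>2 \<le> Re (l2_inner u (B u)) * Re (l2_inner v (B v))"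
proof -
  have lin: "l2_linear B" using B by (simp add: l2_selfadjointD)
  have Bu: "B u \<in> l2" and Bv: "B v \<in> l2" using lin u v by (simp_all add: l2_linearD)
  define c where "c = l2_inner v (B u)"
  define Qu where "Qu = l2_inner u (B u)"
  define Qv where "Qv = l2_inner v (B v)"
  have cuv: "l2_inner u (B v) = cnj c"
    using B u v l2_inner_commute[OF v Bu] by (simp add: l2_selfadjointD c_def)
  have Q: "0 \<le> Re Qu" "0 \<le> Re Qv"
    using B u v unfolding l2_positive_def Qu_def Qv_def less_eq_complex_def by auto
  have "0 \<le> Re Qu - 2 * t * (cmod c)\<^sup>2 + t\<^sup>2 * (cmod c)\<^sup>2 * Re Qv" for t :: real
  proof -
    define s where "s = complex_of_real t * c"
    define w where "w = (\<lambda>n. u n - s * v n)"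
    have w: "w \<in> l2" unfolding w_def using u v by (rule l2_diff_scaled)
    have "l2_inner w (B w) = l2_inner w (B u) - s * l2_inner w (B v)"
      unfolding w_def l2_linear_diff_scaled[OF lin u v] using w[unfolded w_def] Bu Bv
      by (rule l2_inner_diff_scaled_right)
    also have "l2_inner w (B u) = Qu - cnj s * c"
      unfolding w_def Qu_def c_def using Bu u v by (rule l2_inner_diff_scaled_left)
    also have "l2_inner w (B v) = cnj c - cnj s * Qv"
      unfolding w_def Qv_def cuv[symmetric] using Bv u v by (rule l2_inner_diff_scaled_left)
    finally have "l2_inner w (B w)
        = Qu - 2 * complex_of_real t * (c * cnj c) + (complex_of_real t)\<^sup>2 * (c * cnj c) * Qv"
      unfolding s_def by (simp add: algebra_simps power2_eq_square)
    hence "Re (l2_inner w (B w)) = Re Qu - 2 * t * (cmod c)\<^sup>2 + t\<^sup>2 * (cmod c)\<^sup>2 * Re Qv"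
      unfolding complex_norm_square[symmetric] by (simp add: power2_eq_square)
    moreover have "0 \<le> Re (l2_inner w (B w))"
      using B w unfolding l2_positive_def less_eq_complex_def by auto
    ultimately show ?thesis by simp
  qed
  hence "(cmod c)\<^sup>2 \<le> Re Qu * Re Qv" using Q by (intro quadratic_nonneg_imp_le) auto
  thus ?thesis unfolding cuv Qu_def Qv_def by simp
qed

lemma l2_Cauchy_Schwarz:
  "u \<in> l2 \<Longrightarrow> v \<in> l2 \<Longrightarrow> (cmod (l2_inner u v))\<^sup>2 \<le> l2_normsq u * l2_normsq v"
  using positive_form_Cauchy_Schwarz[OF l2_selfadjoint_id l2_positive_id, of u v]
  by (simp add: l2_inner_self)

lemma l2_inner_le_normsq:
  assumes "x \<in> l2" "y \<in> l2" "l2_normsq y \<le> l2_normsq x"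
  shows "cmod (l2_inner x y) \<le> l2_normsq x"
proof -
  have "(cmod (l2_inner x y))\<^sup>2 \<le> l2_normsq x * l2_normsq y" using assms by (simp add: l2_Cauchy_Schwarz)
  also have "\<dots> \<le> (l2_normsq x)\<^sup>2"
    using mult_left_mono[OF assms(3) l2_normsq_nonneg[OF assms(1)]] by (simp add: power2_eq_square)
  finally show ?thesis using power2_le_imp_le l2_normsq_nonneg[OF assms(1)] by blast
qed

lemma l2_Cauchy_Schwarz_Re:
  "u \<in> l2 \<Longrightarrow> v \<in> l2 \<Longrightarrow> (Re (l2_inner u v))\<^sup>2 \<le> l2_normsq u * l2_normsq v"
  using l2_Cauchy_Schwarz[of u v] power_mono[OF abs_Re_le_cmod[of "l2_inner u v"] abs_ge_zero, of 2]
  by simp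

lemma l2_linear_comp: "l2_linear B \<Longrightarrow> l2_linear D \<Longrightarrow> l2_linear (B \<circ> D)"
  unfolding l2_linear_def by simp

lemma l2_linear_funpow: "l2_linear B \<Longrightarrow> l2_linear (B ^^ n)"
  by (induction n) (simp add: l2_linear_def, simp add: l2_linear_comp)

lemma funpow_in_l2: "l2_linear B \<Longrightarrow> x \<in> l2 \<Longrightarrow> (B ^^ n) x \<in> l2"
  using l2_linear_funpow l2_linearD(1) by blast

lemma l2_selfadjoint_funpow: "l2_selfadjoint B \<Longrightarrow> l2_selfadjoint (B ^^ n)"
proof (induction n)
  case 0 thus ?case using l2_selfadjoint_id by (simp add: id_def)
next
  case (Suc n)
  have lin: "l2_linear B" using Suc.prems by (rule l2_selfadjointD)
  show ?case unfolding l2_selfadjoint_def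
  proof (intro conjI ballI)
    show "l2_linear (B ^^ Suc n)" using lin by (rule l2_linear_funpow)
    fix x y assume x: "x \<in> l2" and y: "y \<in> l2"
    have "l2_inner ((B ^^ Suc n) x) y = l2_inner ((B ^^ n) x) (B y)"
      using Suc.prems funpow_in_l2[OF lin x] y by (simp add: l2_selfadjointD)
    also have "\<dots> = l2_inner x ((B ^^ n) (B y))"
      using Suc x l2_linearD(1)[OF lin y] by (simp add: l2_selfadjointD)
    finally show "l2_inner ((B ^^ Suc n) x) y = l2_inner x ((B ^^ Suc n) y)"
      by (simp only: funpow_Suc_right o_apply)
  qed
qed

lemma l2_inner_funpow_add:
  assumes "l2_selfadjoint B" "x \<in> l2" "y \<in> l2"
  shows "l2_inner x ((B ^^ (a + b)) y) = l2_inner ((B ^^ a) x) ((B ^^ b) y)"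
  using l2_selfadjoint_funpow[OF assms(1), of a] assms
    funpow_in_l2[OF l2_selfadjointD(1)[OF assms(1)] assms(3), of b]
  by (simp add: l2_selfadjointD funpow_add)

lemma nat_half_split: obtains m :: nat where "n = m + m \<or> n = m + Suc m"
proof -
  have "\<exists>m. n = m + m \<or> n = m + Suc m" by presburger
  thus ?thesis using that by blast
qed

lemma l2_positive_funpow:
  assumes "l2_selfadjoint B" "l2_positive B"
  shows "l2_positive (B ^^ n)"
  unfolding l2_positive_def
proof
  fix x assume x: "x \<in> l2"
  have y: "(B ^^ m) x \<in> l2" for m using l2_selfadjointD(1)[OF assms(1)] x by (rule funpow_in_l2)
  obtain m where "n = m + m \<or> n = m + Suc m" by (rule nat_half_split)
  thus "0 \<le> l2_inner x ((B ^^ n) x)"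
  proof
    assume "n = m + m"
    hence "l2_inner x ((B ^^ n) x) = of_real (l2_normsq ((B ^^ m) x))"
      using l2_inner_funpow_add[OF assms(1) x x] y by (simp add: l2_inner_self)
    thus ?thesis using l2_normsq_nonneg[OF y] by (simp add: less_eq_complex_def)
  next
    assume "n = m + Suc m"
    hence "l2_inner x ((B ^^ n) x) = l2_inner ((B ^^ m) x) ((B ^^ Suc m) x)"
      using l2_inner_funpow_add[OF assms(1) x x, of m "Suc m"] by (simp only:)
    hence "l2_inner x ((B ^^ n) x) = l2_inner ((B ^^ m) x) (B ((B ^^ m) x))" by simp
    thus ?thesis using assms(2) y unfolding l2_positive_def by simp
  qed
qed

lemma l2_contraction_funpow:
  assumes "l2_linear B" "l2_contraction B"
  shows "l2_contraction (B ^^ n)"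
  unfolding l2_contraction_def
proof (induction n)
  case 0 thus ?case by simp
next
  case (Suc n)
  show ?case
  proof
    fix x assume x: "x \<in> l2"
    have "l2_normsq ((B ^^ Suc n) x) \<le> l2_normsq ((B ^^ n) x)"
      using assms(2) funpow_in_l2[OF assms(1) x] unfolding l2_contraction_def by simp
    also have "\<dots> \<le> l2_normsq x" using Suc.IH x by blast
    finally show "l2_normsq ((B ^^ Suc n) x) \<le> l2_normsq x" .
  qed
qed

definition compl_op :: "((nat \<Rightarrow> complex) \<Rightarrow> (nat \<Rightarrow> complex)) \<Rightarrow> (nat \<Rightarrow> complex) \<Rightarrow> (nat \<Rightarrow> complex)"
  where "compl_op A = (\<lambda>x n. x n - A x n)"

lemma l2_linear_compl_op: "l2_linear A \<Longrightarrow> l2_linear (compl_op A)"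
  unfolding l2_linear_def compl_op_def by (auto simp: l2_diff fun_eq_iff algebra_simps)

lemma l2_selfadjoint_compl_op:
  assumes "l2_selfadjoint A"
  shows "l2_selfadjoint (compl_op A)"
  unfolding l2_selfadjoint_def
proof (intro conjI ballI)
  have lin: "l2_linear A" using assms by (rule l2_selfadjointD)
  thus "l2_linear (compl_op A)" by (rule l2_linear_compl_op)
  fix x y assume x: "x \<in> l2" and y: "y \<in> l2"
  have "l2_inner (compl_op A x) y = l2_inner x y - l2_inner (A x) y"
    unfolding compl_op_def using y x l2_linearD(1)[OF lin x] by (rule l2_inner_diff_left)
  also have "\<dots> = l2_inner x y - l2_inner x (A y)" using assms x y by (simp add: l2_selfadjointD)
  also have "\<dots> = l2_inner x (compl_op A y)"
    unfolding compl_op_def using x y l2_linearD(1)[OF lin y] by (rule l2_inner_diff_right[symmetric])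
  finally show "l2_inner (compl_op A x) y = l2_inner x (compl_op A y)" .
qed

lemma l2_positive_compl_op:
  assumes "l2_selfadjoint A" "l2_contraction A"
  shows "l2_positive (compl_op A)"
  unfolding l2_positive_def
proof
  fix x assume x: "x \<in> l2"
  have Ax: "A x \<in> l2" using assms x by (simp add: l2_selfadjointD l2_linearD)
  have "l2_inner x (compl_op A x) = of_real (l2_normsq x) - l2_inner x (A x)"
    unfolding compl_op_def using l2_inner_diff_right[OF x x Ax] l2_inner_self[OF x] by simp
  moreover have "Re (l2_inner x (A x)) \<le> l2_normsq x"
    using l2_inner_le_normsq[OF x Ax] assms(2) x complex_Re_le_cmod[of "l2_inner x (A x)"]
    unfolding l2_contraction_def by fastforce
  ultimately show "0 \<le> l2_inner x (compl_op A x)"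
    using l2_inner_selfadjoint_real[OF assms(1) x] by (simp add: less_eq_complex_def)
qed

lemma funpow_compl_op_commute:
  assumes "l2_linear A" "x \<in> l2"
  shows "(compl_op A ^^ n) (A x) = A ((compl_op A ^^ n) x)"
proof (induction n)
  case 0 thus ?case by simp
next
  case (Suc n)
  have "(compl_op A ^^ n) x \<in> l2" using l2_linear_compl_op[OF assms(1)] assms(2) by (rule funpow_in_l2)
  with Suc assms show ?case by (simp add: compl_op_def l2_linear_diff l2_linearD)
qed

lemma l2_inner_A_funpow_compl_op:
  assumes "l2_selfadjoint A" "x \<in> l2" "z \<in> l2"
  shows "l2_inner x (A ((compl_op A ^^ m) z)) = l2_inner ((compl_op A ^^ m) x) (A z)"
  using assms l2_selfadjoint_funpow[OF l2_selfadjoint_compl_op[OF assms(1)], of m]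
    funpow_compl_op_commute[OF l2_selfadjointD(1)[OF assms(1)] assms(3), symmetric]
  by (simp add: l2_selfadjointD l2_linearD)

lemma alternating_binomial_sum_Suc:
  fixes f :: "nat \<Rightarrow> 'a :: comm_ring_1"
  shows "(\<Sum>k\<le>Suc n. (-1) ^ k * of_nat (Suc n choose k) * f k) =
         (\<Sum>k\<le>n. (-1) ^ k * of_nat (n choose k) * f k) - (\<Sum>k\<le>n. (-1) ^ k * of_nat (n choose k) * f (Suc k))"
proof -
  have shift: "(\<Sum>k\<le>Suc n. (-1) ^ k * of_nat (m choose k) * f k) =
        f 0 + (\<Sum>k\<le>n. (-1) ^ Suc k * of_nat (m choose Suc k) * f (Suc k))" for m
    by (subst sum.atMost_Suc_shift) simp
  have pascal: "(\<Sum>k\<le>n. (-1) ^ Suc k * of_nat (Suc n choose Suc k) * f (Suc k)) =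
      (\<Sum>k\<le>n. (-1) ^ Suc k * of_nat (n choose Suc k) * f (Suc k))
        - (\<Sum>k\<le>n. (-1) ^ k * of_nat (n choose k) * f (Suc k))"
    unfolding sum_subtractf[symmetric] by (rule sum.cong) (simp_all add: algebra_simps)
  have "(\<Sum>k\<le>Suc n. (-1) ^ k * of_nat (Suc n choose k) * f k) =
      (\<Sum>k\<le>Suc n. (-1) ^ k * of_nat (n choose k) * f k)
        - (\<Sum>k\<le>n. (-1) ^ k * of_nat (n choose k) * f (Suc k))"
    by (simp only: shift pascal add_diff_eq)
  thus ?thesis by (simp add: binomial_eq_0)
qed

lemma funpow_compl_op_binomial:
  assumes A: "l2_linear A"
  shows "x \<in> l2 \<Longrightarrow> (A ^^ m) ((compl_op A ^^ n) x) =
           (\<lambda>j. \<Sum>k\<le>n. (-1) ^ k * of_nat (n choose k) * (A ^^ (k + m)) x j)"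
proof (induction n arbitrary: m x)
  case 0 thus ?case by simp
next
  case (Suc n)
  have C: "l2_linear (compl_op A)" using A by (rule l2_linear_compl_op)
  have Ax: "A x \<in> l2" using A Suc.prems by (rule l2_linearD)
  have "(compl_op A ^^ Suc n) x = (\<lambda>j. (compl_op A ^^ n) x j - (compl_op A ^^ n) (A x) j)"
    using l2_linear_funpow[OF C] Suc.prems Ax
    by (simp only: funpow_Suc_right o_apply compl_op_def l2_linear_diff)
  hence "(A ^^ m) ((compl_op A ^^ Suc n) x)
      = (\<lambda>j. (A ^^ m) ((compl_op A ^^ n) x) j - (A ^^ m) ((compl_op A ^^ n) (A x)) j)"
    using l2_linear_funpow[OF A] funpow_in_l2[OF C Suc.prems] funpow_in_l2[OF C Ax]
    by (simp add: l2_linear_diff)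
  also have "\<dots> = (\<lambda>j. (\<Sum>k\<le>n. (-1) ^ k * of_nat (n choose k) * (A ^^ (k + m)) x j)
                      - (\<Sum>k\<le>n. (-1) ^ k * of_nat (n choose k) * (A ^^ (Suc k + m)) x j))"
    using Suc.IH[OF Suc.prems] Suc.IH[OF Ax] by (simp add: funpow_swap1[symmetric])
  also have "\<dots> = (\<lambda>j. \<Sum>k\<le>Suc n. (-1) ^ k * of_nat (Suc n choose k) * (A ^^ (k + m)) x j)"
    using alternating_binomial_sum_Suc[of n "\<lambda>k. (A ^^ (k + m)) x j" for j] by simp
  finally show ?case .
qed

lemma A_funpow_compl_op_telescope:
  assumes lin: "l2_linear A" and e: "e \<in> l2"
  shows "A ((compl_op A ^^ n) e) = (\<lambda>i. A e i - (\<Sum>j<n. A ((compl_op A ^^ j) (A e)) i))"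
proof (induction n)
  case 0 thus ?case by simp
next
  case (Suc n)
  have C: "l2_linear (compl_op A)" using lin by (rule l2_linear_compl_op)
  have Ae: "A e \<in> l2" using lin e by (rule l2_linearD)
  have "(compl_op A ^^ Suc n) e = (\<lambda>j. (compl_op A ^^ n) e j - (compl_op A ^^ n) (A e) j)"
    using l2_linear_funpow[OF C] e Ae
    by (simp only: funpow_Suc_right o_apply compl_op_def l2_linear_diff)
  hence "A ((compl_op A ^^ Suc n) e) = (\<lambda>i. A ((compl_op A ^^ n) e) i - A ((compl_op A ^^ n) (A e)) i)"
    using lin funpow_in_l2[OF C e] funpow_in_l2[OF C Ae] by (simp add: l2_linear_diff)
  also have "\<dots> = (\<lambda>i. A e i - (\<Sum>j<Suc n. A ((compl_op A ^^ j) (A e)) i))"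
    unfolding Suc.IH by (simp add: algebra_simps)
  finally show ?case .
qed

section \<open>Density operators\<close>

lemma density_operatorD:
  assumes "density_operator A"
  shows "l2_selfadjoint A" "l2_linear A" "l2_positive A" "(\<lambda>i. A (basis_vec i) i) sums 1"
  using assms by (simp_all add: density_operator_iff l2_selfadjointD)

lemma density_normsq_le_form:
  assumes D: "density_operator A" and x: "x \<in> l2"
  shows "l2_normsq (A x) \<le> Re (l2_inner x (A x))"
proof -
  note A = density_operatorD[OF D]
  define r where "r = Re (l2_inner x (A x))"
  have "(cmod (A x i))\<^sup>2 \<le> Re (A (basis_vec i) i) * r" for i
    using positive_form_Cauchy_Schwarz[OF A(1,3) basis_vec_in_l2 x, of i]
    unfolding r_def l2_inner_basis_vec_left .
  moreover have "(\<lambda>i. (cmod (A x i))\<^sup>2) sums l2_normsq (A x)"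
    using l2_linearD(1)[OF A(2) x] by (rule l2_normsq_sums)
  moreover have "(\<lambda>i. Re (A (basis_vec i) i) * r) sums r"
    using sums_mult2[OF A(4), of "of_real r"] by (simp add: sums_complex_iff)
  ultimately show ?thesis unfolding r_def by (rule sums_le)
qed

lemma density_contraction:
  assumes D: "density_operator A"
  shows "l2_contraction A"
  unfolding l2_contraction_def
proof
  fix x assume x: "x \<in> l2"
  have Ax: "A x \<in> l2" using density_operatorD(2)[OF D] x by (rule l2_linearD)
  define a where "a = l2_normsq (A x)"
  define r where "r = Re (l2_inner x (A x))"
  have a: "0 \<le> a" "a \<le> r" unfolding a_def r_def
    using l2_normsq_nonneg[OF Ax] density_normsq_le_form[OF D x] by auto
  have "a * a \<le> r\<^sup>2" using a by (simp add: power2_eq_square mult_mono)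
  also have "\<dots> \<le> l2_normsq x * a"
    unfolding r_def a_def using x Ax by (rule l2_Cauchy_Schwarz_Re)
  finally have "a \<le> l2_normsq x" using a l2_normsq_nonneg[OF x] by (cases "a = 0") auto
  thus "l2_normsq (A x) \<le> l2_normsq x" unfolding a_def .
qed

lemma density_matrix_entry:
  assumes "density_operator A"
  shows "l2_inner (basis_vec i) (A (basis_vec j)) = cnj (A (basis_vec i) j)"
  using l2_selfadjointD(2)[OF density_operatorD(1)[OF assms] basis_vec_in_l2 basis_vec_in_l2]
  by (simp add: l2_inner_basis_vec_right)

lemma density_eq_matrix_op:
  assumes D: "density_operator A" and x: "x \<in> l2"
    and M: "\<And>i j. l2_inner (basis_vec i) (A (basis_vec j)) = M i j"
  shows "matrix_op M x = A x"
proof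
  fix i
  have "A x i = l2_inner (A (basis_vec i)) x"
    using density_operatorD(1)[OF D] basis_vec_in_l2 x
    by (simp add: l2_selfadjointD l2_inner_basis_vec_left[symmetric])
  also have "\<dots> = (\<Sum>j. cnj (A (basis_vec i) j) * x j)" by (simp add: l2_inner_def)
  also have "\<dots> = (\<Sum>j. M i j * x j)" using density_matrix_entry[OF D] M by simp
  finally show "matrix_op M x i = A x i" by (simp add: matrix_op_def)
qed

lemma density_pow_diag:
  assumes D: "density_operator A"
    and M: "\<And>i j. l2_inner (basis_vec i) (A (basis_vec j)) = M i j"
  shows "pow_diag M k i = (A ^^ k) (basis_vec i) i"
proof -
  have "(matrix_op M ^^ k) x = (A ^^ k) x" if "x \<in> l2" for x
    using that
    by (induction k) (simp_all add: density_eq_matrix_op[OF D _ M] funpow_in_l2 density_operatorD(2)[OF D])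
  thus ?thesis unfolding pow_diag_def l2_inner_basis_vec_left using basis_vec_in_l2 by simp
qed

lemma density_A_compl_op_positive:
  assumes D: "density_operator A" and y: "y \<in> l2"
  shows "0 \<le> l2_inner y (A (compl_op A y))"
proof -
  note A = density_operatorD[OF D]
  have Ay: "A y \<in> l2" and AAy: "A (A y) \<in> l2" using A(2) y by (simp_all add: l2_linearD)
  have "l2_inner y (A (compl_op A y)) = l2_inner y (A y) - l2_inner y (A (A y))"
    unfolding compl_op_def l2_linear_diff[OF A(2) y Ay] using y Ay AAy by (rule l2_inner_diff_right)
  also have "l2_inner y (A (A y)) = of_real (l2_normsq (A y))"
    using l2_selfadjointD(2)[OF A(1) y Ay] l2_inner_self[OF Ay] by simp
  finally show ?thesis
    using density_normsq_le_form[OF D y] l2_inner_selfadjoint_real[OF A(1) y]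
    by (simp add: less_eq_complex_def)
qed

lemma density_A_funpow_compl_op_positive:
  assumes D: "density_operator A" and x: "x \<in> l2"
  shows "0 \<le> l2_inner x (A ((compl_op A ^^ n) x))"
proof -
  note A = density_operatorD[OF D]
  define y where "y j = (compl_op A ^^ j) x" for j
  have y: "y j \<in> l2" for j unfolding y_def using l2_linear_compl_op[OF A(2)] x by (rule funpow_in_l2)
  obtain m where "n = m + m \<or> n = m + Suc m" by (rule nat_half_split)
  thus ?thesis
  proof
    assume "n = m + m"
    hence "l2_inner x (A ((compl_op A ^^ n) x)) = l2_inner (y m) (A (y m))"
      using l2_inner_A_funpow_compl_op[OF A(1) x y, of m m] unfolding y_def by (simp add: funpow_add)
    thus ?thesis using A(3) y unfolding l2_positive_def by simp
  next
    assume "n = m + Suc m"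
    hence "l2_inner x (A ((compl_op A ^^ n) x)) = l2_inner (y m) (A (compl_op A (y m)))"
      using l2_inner_A_funpow_compl_op[OF A(1) x y, of m "Suc m"] unfolding y_def
      by (simp add: funpow_add funpow_swap1)
    thus ?thesis using density_A_compl_op_positive[OF D y] by simp
  qed
qed

lemma density_summable_normsq_basis:
  assumes D: "density_operator A"
  shows "summable (\<lambda>i. l2_normsq (A (basis_vec i)))" "(\<Sum>i. l2_normsq (A (basis_vec i))) \<le> 1"
proof -
  note A = density_operatorD[OF D]
  have tr: "(\<lambda>i. Re (A (basis_vec i) i)) sums 1" using A(4) by (simp add: sums_complex_iff)
  have le: "l2_normsq (A (basis_vec i)) \<le> Re (A (basis_vec i) i)" for i
    using density_normsq_le_form[OF D basis_vec_in_l2, of i] by (simp add: l2_inner_basis_vec_left)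
  have nn: "0 \<le> l2_normsq (A (basis_vec i))" for i
    using l2_linearD(1)[OF A(2) basis_vec_in_l2] by (rule l2_normsq_nonneg)
  show s: "summable (\<lambda>i. l2_normsq (A (basis_vec i)))"
    by (rule summable_comparison_test'[OF sums_summable[OF tr]]) (use nn le in auto)
  show "(\<Sum>i. l2_normsq (A (basis_vec i))) \<le> 1"
    using suminf_le[OF le s sums_summable[OF tr]] tr by (simp add: sums_iff)
qed

lemma density_summable_trace_funpow:
  assumes D: "density_operator A"
  shows "summable (\<lambda>i. (A ^^ Suc k) (basis_vec i) i)"
proof (cases k)
  case 0 thus ?thesis using density_operatorD(4)[OF D] by (simp add: sums_summable)
next
  case (Suc k')
  note A = density_operatorD[OF D]
  show ?thesis
  proof (rule summable_comparison_test'[OF density_summable_normsq_basis(1)[OF D]])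
    fix i
    define e where "e = basis_vec i"
    have e: "e \<in> l2" unfolding e_def by (rule basis_vec_in_l2)
    have Ae: "A e \<in> l2" using A(2) e by (rule l2_linearD)
    have "(A ^^ Suc k) e i = l2_inner (A e) ((A ^^ k) e)"
      using l2_inner_funpow_add[OF A(1) e e, of 1 k] unfolding e_def by (simp add: l2_inner_basis_vec_left)
    moreover have "l2_normsq ((A ^^ k') (A e)) \<le> l2_normsq (A e)"
      using l2_contraction_funpow[OF A(2) density_contraction[OF D], of k'] Ae
      unfolding l2_contraction_def by simp
    hence "l2_normsq ((A ^^ k) e) \<le> l2_normsq (A e)" using Suc by (simp add: funpow_swap1)
    ultimately show "norm ((A ^^ Suc k) (basis_vec i) i) \<le> l2_normsq (A (basis_vec i))"
      using l2_inner_le_normsq[OF Ae funpow_in_l2[OF A(2) e]] unfolding e_def by simp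
  qed
qed

lemma sums_nonneg_complex:
  fixes f :: "nat \<Rightarrow> complex"
  assumes "f sums s" "\<And>n. 0 \<le> f n"
  shows "0 \<le> s"
proof -
  have Re: "(\<lambda>n. Re (f n)) sums Re s" and Im: "(\<lambda>n. Im (f n)) sums Im s"
    using assms(1) by (simp_all add: sums_complex_iff)
  have "(\<lambda>n. Im (f n)) = (\<lambda>n. 0)" "\<And>n. 0 \<le> Re (f n)"
    using assms(2) by (auto simp: less_eq_complex_def)
  hence "Im s = 0" "0 \<le> Re s"
    using sums_unique2[OF Im] sums_le[OF _ sums_zero Re] by auto
  thus ?thesis by (simp add: less_eq_complex_def)
qed

section \<open>Double series\<close>

lemma double_series_rows_sums:
  fixes g :: "nat \<Rightarrow> nat \<Rightarrow> 'a :: banach"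
  assumes abs: "(\<lambda>(i, j). norm (g i j)) summable_on UNIV"
    and S: "((\<lambda>(i, j). g i j) has_sum S) UNIV"
  shows "summable (\<lambda>j. norm (g i j))" "(\<lambda>i. \<Sum>j. g i j) sums S"
proof -
  have "(\<lambda>j. norm (g i j)) summable_on UNIV" for i
    using summable_on_SigmaD1[of "\<lambda>i j. norm (g i j)" UNIV "\<lambda>_. UNIV" i] abs by simp
  thus row: "summable (\<lambda>j. norm (g i j))" for i by (rule summable_on_imp_summable)
  have "((\<lambda>j. g i j) has_sum (\<Sum>j. g i j)) UNIV" for i
    by (rule norm_summable_imp_has_sum[OF row summable_sums[OF summable_norm_cancel[OF row]]])
  hence "((\<lambda>i. \<Sum>j. g i j) has_sum S) UNIV"
    using has_sum_SigmaD[where f = "\<lambda>(i, j). g i j" and A = UNIV and B = "\<lambda>_. UNIV"] S by simp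
  thus "(\<lambda>i. \<Sum>j. g i j) sums S" by (rule has_sum_imp_sums)
qed

lemma double_series_sums:
  fixes g :: "nat \<Rightarrow> nat \<Rightarrow> 'a :: banach"
  assumes abs: "(\<lambda>(i, j). norm (g i j)) summable_on UNIV"
  shows "summable (\<lambda>j. norm (g i j))"
    and "(\<lambda>i. \<Sum>j. g i j) sums (\<Sum>\<^sub>\<infinity>(i, j). g i j)"
    and "(\<lambda>j. \<Sum>i. g i j) sums (\<Sum>\<^sub>\<infinity>(i, j). g i j)"
proof -
  have "(\<lambda>(i, j). g i j) summable_on UNIV"
    by (rule abs_summable_summable) (use abs in \<open>simp add: case_prod_unfold\<close>)
  hence S: "((\<lambda>(i, j). g i j) has_sum (\<Sum>\<^sub>\<infinity>(i, j). g i j)) UNIV"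
    by (rule has_sum_infsum)
  show "summable (\<lambda>j. norm (g i j))" "(\<lambda>i. \<Sum>j. g i j) sums (\<Sum>\<^sub>\<infinity>(i, j). g i j)"
    using double_series_rows_sums[OF abs S] by blast+
  have "(\<lambda>(j, i). norm (g i j)) summable_on UNIV"
    using abs summable_on_swap[where f = "\<lambda>(i, j). norm (g i j)" and A = UNIV and B = UNIV] by simp
  moreover have "((\<lambda>(j, i). g i j) has_sum (\<Sum>\<^sub>\<infinity>(i, j). g i j)) UNIV"
    using S has_sum_swap[where f = "\<lambda>(i, j). g i j" and A = UNIV and B = UNIV] by simp
  ultimately show "(\<lambda>j. \<Sum>i. g i j) sums (\<Sum>\<^sub>\<infinity>(i, j). g i j)"
    by (rule double_series_rows_sums(2)[where g = "\<lambda>j i. g i j"])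
qed

lemma nonneg_double_series_has_sum:
  fixes f :: "nat \<Rightarrow> nat \<Rightarrow> real"
  assumes nonneg: "\<And>i j. 0 \<le> f i j" and rows: "\<And>i. f i sums r i" and "summable r"
  shows "((\<lambda>(i, j). f i j) has_sum suminf r) UNIV"
proof -
  have row: "((\<lambda>j. (\<lambda>(i, j). f i j) (i, j)) has_sum r i) UNIV" for i
    using sums_nonneg_imp_has_sum[OF rows nonneg] by simp
  have "0 \<le> r i" for i using nonneg by (intro sums_le[OF _ sums_zero rows])
  hence r: "(r has_sum suminf r) UNIV" using assms(3) by (intro sums_nonneg_imp_has_sum summable_sums)
  have "(\<lambda>(i, j). f i j) summable_on Sigma UNIV (\<lambda>_. UNIV)"
    by (rule summable_on_SigmaI[OF row has_sum_imp_summable[OF r]]) (simp add: nonneg)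
  thus ?thesis using has_sum_SigmaI[OF row r] by simp
qed

section \<open>The matrix conditions\<close>

lemma density_matrix_Hilbert_Schmidt:
  assumes D: "density_operator A"
    and M: "\<And>i j. l2_inner (basis_vec i) (A (basis_vec j)) = M i j"
  shows "(\<lambda>(i, j). (cmod (M i j))\<^sup>2) summable_on UNIV \<and> (\<Sum>\<^sub>\<infinity>(i, j). (cmod (M i j))\<^sup>2) \<le> 1"
proof -
  have "(cmod (M i j))\<^sup>2 = (cmod (A (basis_vec i) j))\<^sup>2" for i j
    using density_matrix_entry[OF D, of i j] M[of i j] by simp
  moreover have "((\<lambda>(i, j). (cmod (A (basis_vec i) j))\<^sup>2) has_sum (\<Sum>i. l2_normsq (A (basis_vec i)))) UNIV"
    using density_summable_normsq_basis(1)[OF D]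
      l2_normsq_sums[OF l2_linearD(1)[OF density_operatorD(2)[OF D] basis_vec_in_l2]]
    by (intro nonneg_double_series_has_sum) auto
  ultimately show ?thesis
    using density_summable_normsq_basis(2)[OF D] by (auto simp: summable_on_def infsumI)
qed

lemma density_matrix_hermitian:
  assumes D: "density_operator A"
    and M: "\<And>i j. l2_inner (basis_vec i) (A (basis_vec j)) = M i j"
  shows "M i j = cnj (M j i)"
  using density_matrix_entry[OF D, of i j] M[of i j] M[of j i] by (simp add: l2_inner_basis_vec_left)

lemma trace_alternating_binomial_sums:
  assumes A: "l2_linear A" and pd: "\<And>k i. pow_diag M k i = (A ^^ k) (basis_vec i) i"
    and t: "\<forall>k\<le>n. (\<lambda>i. pow_diag M (k + 1) i) sums t k"
  shows "(\<lambda>i. A ((compl_op A ^^ n) (basis_vec i)) i) sums (\<Sum>k\<le>n. (-1) ^ k * of_nat (n choose k) * t k)"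
proof -
  have "(\<lambda>i. \<Sum>k\<le>n. (-1) ^ k * of_nat (n choose k) * pow_diag M (k + 1) i) sums
        (\<Sum>k\<le>n. (-1) ^ k * of_nat (n choose k) * t k)"
    using t by (intro sums_sum sums_mult) simp
  moreover have "(\<Sum>k\<le>n. (-1) ^ k * of_nat (n choose k) * pow_diag M (k + 1) i) =
                 A ((compl_op A ^^ n) (basis_vec i)) i" for i
    using funpow_compl_op_binomial[OF A basis_vec_in_l2, of 1 n i] by (simp add: pd)
  ultimately show ?thesis by simp
qed

lemma density_matrix_moments:
  assumes D: "density_operator A"
    and M: "\<And>i j. l2_inner (basis_vec i) (A (basis_vec j)) = M i j"
  shows "\<exists>t :: nat \<Rightarrow> complex.
        (\<forall>k\<le>n. (\<lambda>i. pow_diag M (k + 1) i) sums t k) \<and>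
        0 \<le> (\<Sum>k\<le>n. (-1) ^ k * of_nat (n choose k) * t k)"
proof (intro exI conjI)
  let ?t = "\<lambda>k. \<Sum>i. (A ^^ Suc k) (basis_vec i) i"
  show t: "\<forall>k\<le>n. (\<lambda>i. pow_diag M (k + 1) i) sums ?t k"
    using density_summable_trace_funpow[OF D] by (simp add: density_pow_diag[OF D M] summable_sums)
  show "0 \<le> (\<Sum>k\<le>n. (-1) ^ k * of_nat (n choose k) * ?t k)"
    using trace_alternating_binomial_sums[OF density_operatorD(2)[OF D] density_pow_diag[OF D M] t]
    by (rule sums_nonneg_complex)
      (use density_A_funpow_compl_op_positive[OF D basis_vec_in_l2] in \<open>simp add: l2_inner_basis_vec_left\<close>)
qed

section \<open>Operators given by Hilbert--Schmidt matrices\<close>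

definition matrix_row :: "(nat \<Rightarrow> nat \<Rightarrow> complex) \<Rightarrow> nat \<Rightarrow> nat \<Rightarrow> complex" where
  "matrix_row M i = (\<lambda>j. cnj (M i j))"

lemma matrix_op_eq_l2_inner: "matrix_op M x i = l2_inner (matrix_row M i) x"
  by (simp add: matrix_op_def l2_inner_def matrix_row_def)

lemma matrix_op_basis_vec: "matrix_op M (basis_vec j) i = M i j"
proof -
  have "(\<lambda>k. M i k * basis_vec j k) = (\<lambda>k. if k = j then M i j else 0)" by (auto simp: basis_vec_def)
  thus ?thesis unfolding matrix_op_def using sums_single[of j "\<lambda>_. M i j"] by (simp add: sums_iff)
qed

lemma Hilbert_Schmidt_rows:
  assumes HS: "(\<lambda>(i, j). (cmod (M i j))\<^sup>2) summable_on UNIV"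
    and le: "(\<Sum>\<^sub>\<infinity>(i, j). (cmod (M i j))\<^sup>2) \<le> 1"
  shows "matrix_row M i \<in> l2"
    and "summable (\<lambda>i. l2_normsq (matrix_row M i))" "(\<Sum>i. l2_normsq (matrix_row M i)) \<le> 1"
proof -
  have abs: "(\<lambda>(i, j). norm ((cmod (M i j))\<^sup>2)) summable_on UNIV" using HS by simp
  show "matrix_row M i \<in> l2"
    using double_series_sums(1)[OF abs, of i] by (simp add: in_l2_iff matrix_row_def)
  have "(\<lambda>i. l2_normsq (matrix_row M i)) sums (\<Sum>\<^sub>\<infinity>(i, j). (cmod (M i j))\<^sup>2)"
    using double_series_sums(2)[OF abs] by (simp add: l2_normsq_def matrix_row_def)
  thus "summable (\<lambda>i. l2_normsq (matrix_row M i))" "(\<Sum>i. l2_normsq (matrix_row M i)) \<le> 1"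
    using le by (auto simp: sums_iff)
qed

lemma Hilbert_Schmidt_matrix_op:
  assumes HS: "(\<lambda>(i, j). (cmod (M i j))\<^sup>2) summable_on UNIV"
    and le: "(\<Sum>\<^sub>\<infinity>(i, j). (cmod (M i j))\<^sup>2) \<le> 1"
  shows "l2_linear (matrix_op M)" "l2_contraction (matrix_op M)"
proof -
  note R = Hilbert_Schmidt_rows[OF HS le]
  have est: "(cmod (matrix_op M x i))\<^sup>2 \<le> l2_normsq (matrix_row M i) * l2_normsq x" if "x \<in> l2" for x i
    unfolding matrix_op_eq_l2_inner using R(1) that by (rule l2_Cauchy_Schwarz)
  have sm: "summable (\<lambda>i. l2_normsq (matrix_row M i) * l2_normsq x)" for x
    using R(2) by (rule summable_mult2)
  have l2: "matrix_op M x \<in> l2" if x: "x \<in> l2" for x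
    unfolding in_l2_iff by (rule summable_comparison_test'[OF sm]) (use est[OF x] in simp)
  show "l2_linear (matrix_op M)" unfolding l2_linear_def
  proof (intro conjI ballI allI)
    show "matrix_op M x \<in> l2" if "x \<in> l2" for x using l2 that .
    fix x y a b assume "x \<in> l2" "y \<in> l2"
    thus "matrix_op M (\<lambda>n. a * x n + b * y n) = (\<lambda>n. a * matrix_op M x n + b * matrix_op M y n)"
      unfolding fun_eq_iff matrix_op_eq_l2_inner using R(1) by (simp add: l2_inner_lin_comb_right)
  qed
  show "l2_contraction (matrix_op M)" unfolding l2_contraction_def
  proof
    fix x assume x: "x \<in> l2"
    have "l2_normsq (matrix_op M x) \<le> (\<Sum>i. l2_normsq (matrix_row M i) * l2_normsq x)"
      unfolding l2_normsq_def[of "matrix_op M x"]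
      by (rule suminf_le[OF est[OF x] _ sm]) (use l2[OF x] in \<open>simp add: in_l2_iff\<close>)
    also have "\<dots> = (\<Sum>i. l2_normsq (matrix_row M i)) * l2_normsq x" using R(2) by (rule suminf_mult2[symmetric])
    also have "\<dots> \<le> l2_normsq x" using mult_right_mono[OF R(3) l2_normsq_nonneg[OF x]] by simp
    finally show "l2_normsq (matrix_op M x) \<le> l2_normsq x" .
  qed
qed

text \<open>Both sides of \<open>\<langle>M x, y\<rangle> = \<langle>x, M y\<rangle>\<close> are iterated sums of
  \<open>g i j = cnj (M i j) cnj (x j) y i\<close>, absolutely summable since \<open>|g i j| \<le> |M i j|\<^sup>2 + |y i|\<^sup>2 |x j|\<^sup>2\<close>.\<close>

lemma Hilbert_Schmidt_matrix_op_selfadjoint: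
  assumes HS: "(\<lambda>(i, j). (cmod (M i j))\<^sup>2) summable_on UNIV"
    and le: "(\<Sum>\<^sub>\<infinity>(i, j). (cmod (M i j))\<^sup>2) \<le> 1"
    and herm: "\<And>i j. M i j = cnj (M j i)"
  shows "l2_selfadjoint (matrix_op M)"
  unfolding l2_selfadjoint_def
proof (intro conjI ballI)
  note R = Hilbert_Schmidt_rows[OF HS le]
  show lin: "l2_linear (matrix_op M)" using Hilbert_Schmidt_matrix_op[OF HS le] by blast
  fix x y assume x: "x \<in> l2" and y: "y \<in> l2"
  define g where "g i j = cnj (M i j) * cnj (x j) * y i" for i j
  have "((\<lambda>(i, j). (cmod (y i))\<^sup>2 * (cmod (x j))\<^sup>2) has_sum (\<Sum>i. (cmod (y i))\<^sup>2 * l2_normsq x)) UNIV"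
    using y
    by (intro nonneg_double_series_has_sum[where r = "\<lambda>i. (cmod (y i))\<^sup>2 * l2_normsq x"]
        sums_mult l2_normsq_sums[OF x] summable_mult2) (auto simp: in_l2_iff)
  hence "(\<lambda>(i, j). (cmod (y i))\<^sup>2 * (cmod (x j))\<^sup>2) summable_on UNIV" by (rule has_sum_imp_summable)
  hence bound_summable:
    "(\<lambda>(i, j). (cmod (M i j))\<^sup>2 + (cmod (y i))\<^sup>2 * (cmod (x j))\<^sup>2) summable_on UNIV"
    using summable_on_add[OF HS] by (simp add: case_prod_unfold)
  have bound: "norm (g i j) \<le> (cmod (M i j))\<^sup>2 + (cmod (y i))\<^sup>2 * (cmod (x j))\<^sup>2" for i j
  proof -
    have "norm (g i j) = cmod (M i j) * (cmod (y i) * cmod (x j))" by (simp add: g_def norm_mult mult_ac)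
    also have "\<dots> \<le> (cmod (M i j))\<^sup>2 + (cmod (y i) * cmod (x j))\<^sup>2"
    proof -
      have "0 \<le> cmod (M i j) * (cmod (y i) * cmod (x j))" by simp
      thus ?thesis using sum_squares_bound[of "cmod (M i j)" "cmod (y i) * cmod (x j)"] by linarith
    qed
    finally show ?thesis by (simp add: power_mult_distrib)
  qed
  have abs: "(\<lambda>(i, j). norm (g i j)) summable_on UNIV"
    by (rule summable_on_comparison_test[OF bound_summable]) (use bound in auto)
  have row_sums: "(\<lambda>j. M i j * z j) sums matrix_op M z i" if "z \<in> l2" for i z
    using l2_inner_sums[OF R(1) that, of i] by (simp add: matrix_row_def matrix_op_eq_l2_inner)
  have "(\<lambda>j. g i j) sums (cnj (matrix_op M x i) * y i)" for i
    using sums_mult2[OF sums_cnj[THEN iffD2, OF row_sums[OF x, of i]], of "y i"] by (simp add: g_def)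
  hence rows: "(\<Sum>j. g i j) = cnj (matrix_op M x i) * y i" for i by (simp add: sums_iff)
  have "(\<lambda>i. g i j) sums (cnj (x j) * matrix_op M y j)" for j
    using sums_mult[OF row_sums[OF y, of j], of "cnj (x j)"] herm[of j] by (simp add: g_def mult_ac)
  hence cols: "(\<Sum>i. g i j) = cnj (x j) * matrix_op M y j" for j by (simp add: sums_iff)
  have "l2_inner (matrix_op M x) y = (\<Sum>\<^sub>\<infinity>(i, j). g i j)"
    using double_series_sums(2)[OF abs] unfolding rows l2_inner_def by (simp add: sums_iff)
  also have "\<dots> = l2_inner x (matrix_op M y)"
    using double_series_sums(3)[OF abs] unfolding cols l2_inner_def by (simp add: sums_iff)
  finally show "l2_inner (matrix_op M x) y = l2_inner x (matrix_op M y)" .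
qed

section \<open>Positivity from the moment conditions\<close>

lemma selfadjoint_normsq_funpow_log_convex:
  assumes C: "l2_selfadjoint C" and x: "x \<in> l2"
  shows "(l2_normsq ((C ^^ Suc k) x))\<^sup>2 \<le> l2_normsq ((C ^^ k) x) * l2_normsq ((C ^^ Suc (Suc k)) x)"
proof -
  have lin: "l2_linear C" using C by (rule l2_selfadjointD)
  have "complex_of_real (l2_normsq ((C ^^ Suc k) x)) = l2_inner ((C ^^ Suc k) x) ((C ^^ Suc k) x)"
    by (rule l2_inner_self[OF funpow_in_l2[OF lin x], symmetric])
  also have "\<dots> = l2_inner ((C ^^ k) x) ((C ^^ Suc (Suc k)) x)"
    using l2_inner_funpow_add[OF C x x, of "Suc k" "Suc k"] l2_inner_funpow_add[OF C x x, of k "Suc (Suc k)"]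
    by simp
  finally have "(l2_normsq ((C ^^ Suc k) x))\<^sup>2 = (cmod (l2_inner ((C ^^ k) x) ((C ^^ Suc (Suc k)) x)))\<^sup>2"
    using l2_normsq_nonneg[OF funpow_in_l2[OF lin x]] by (metis norm_of_real abs_of_nonneg)
  also have "\<dots> \<le> l2_normsq ((C ^^ k) x) * l2_normsq ((C ^^ Suc (Suc k)) x)"
    using funpow_in_l2[OF lin x] funpow_in_l2[OF lin x] by (rule l2_Cauchy_Schwarz)
  finally show ?thesis .
qed

lemma selfadjoint_normsq_funpow_ratio:
  assumes C: "l2_selfadjoint C" and x: "x \<in> l2" and pos: "0 < l2_normsq x" and q: "0 < q"
    and base: "q * l2_normsq x \<le> l2_normsq (C x)"
  shows "q * l2_normsq ((C ^^ k) x) \<le> l2_normsq ((C ^^ Suc k) x) \<and> 0 < l2_normsq ((C ^^ k) x)"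
proof (induction k)
  case 0 thus ?case using base pos by simp
next
  case (Suc k)
  define a where "a = l2_normsq ((C ^^ k) x)"
  define b where "b = l2_normsq ((C ^^ Suc k) x)"
  define c where "c = l2_normsq ((C ^^ Suc (Suc k)) x)"
  have a: "0 < a" and ab: "q * a \<le> b" using Suc.IH unfolding a_def b_def by auto
  have b: "0 < b" using a ab q by (smt (verit) mult_pos_pos)
  have "a * (q * b) \<le> b * b" using ab b by (simp add: mult_right_mono mult_ac)
  also have "\<dots> \<le> a * c"
    using selfadjoint_normsq_funpow_log_convex[OF C x, of k] unfolding a_def b_def c_def
    by (simp add: power2_eq_square)
  finally have "q * b \<le> c" using a by simp
  thus ?case using b unfolding b_def c_def by simp
qed

lemma selfadjoint_normsq_funpow_geometric:
  assumes C: "l2_selfadjoint C" and x: "x \<in> l2" and pos: "0 < l2_normsq x" and q: "0 < q"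
    and base: "q * l2_normsq x \<le> l2_normsq (C x)"
  shows "q ^ k * l2_normsq x \<le> l2_normsq ((C ^^ k) x)"
proof (induction k)
  case 0 thus ?case by simp
next
  case (Suc k)
  have "q ^ Suc k * l2_normsq x \<le> q * l2_normsq ((C ^^ k) x)" using Suc.IH q by simp
  also have "\<dots> \<le> l2_normsq ((C ^^ Suc k) x)" using selfadjoint_normsq_funpow_ratio[OF assms] by blast
  finally show ?case .
qed

lemma normsq_ge_of_compl_op:
  assumes A: "l2_selfadjoint A" and z: "z \<in> l2" and d: "0 \<le> d"
    and g: "(1 + d)\<^sup>2 * l2_normsq z \<le> l2_normsq (compl_op A z)"
  shows "d\<^sup>2 * l2_normsq z \<le> l2_normsq (A z)"
proof -
  have Cz: "compl_op A z \<in> l2"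
    using l2_linear_compl_op[OF l2_selfadjointD(1)[OF A]] z by (rule l2_linearD)
  define a where "a = sqrt (l2_normsq z)"
  define b where "b = sqrt (l2_normsq (compl_op A z))"
  have a: "0 \<le> a" "a\<^sup>2 = l2_normsq z" unfolding a_def using l2_normsq_nonneg[OF z] by simp_all
  have b: "0 \<le> b" "b\<^sup>2 = l2_normsq (compl_op A z)"
    unfolding b_def using l2_normsq_nonneg[OF Cz] by simp_all
  have "sqrt ((1 + d)\<^sup>2 * l2_normsq z) \<le> b" unfolding b_def using g by (rule real_sqrt_le_mono)
  hence "(1 + d) * a \<le> b" unfolding a_def using d by (simp add: real_sqrt_mult)
  hence "(d * a)\<^sup>2 \<le> (b - a)\<^sup>2" using d a by (intro power_mono) (simp_all add: algebra_simps)
  also have "(b - a)\<^sup>2 = a\<^sup>2 - 2 * (a * b) + b\<^sup>2" by (simp add: power2_eq_square algebra_simps)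
  also have "\<dots> \<le> l2_normsq (\<lambda>n. z n - compl_op A z n)"
  proof -
    have "(Re (l2_inner z (compl_op A z)))\<^sup>2 \<le> (a * b)\<^sup>2"
      using l2_Cauchy_Schwarz_Re[OF z Cz] a b by (simp add: power_mult_distrib)
    hence "Re (l2_inner z (compl_op A z)) \<le> a * b" by (rule power2_le_imp_le) (simp add: a b)
    thus ?thesis unfolding l2_normsq_diff[OF z Cz] a b by simp
  qed
  also have "(\<lambda>n. z n - compl_op A z n) = A z" by (simp add: compl_op_def)
  finally show ?thesis using a by (simp add: power_mult_distrib)
qed

lemma normsq_A_funpow_compl_op_unbounded:
  assumes A: "l2_selfadjoint A" and x: "x \<in> l2" and neg: "Re (l2_inner x (A x)) < 0"
  obtains m where "l2_normsq x < l2_normsq (A ((compl_op A ^^ m) x))"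
proof -
  have lin: "l2_linear A" using A by (rule l2_selfadjointD)
  have C: "l2_selfadjoint (compl_op A)" using A by (rule l2_selfadjoint_compl_op)
  have Ax: "A x \<in> l2" and Cx: "compl_op A x \<in> l2"
    using lin l2_linear_compl_op[OF lin] x by (simp_all add: l2_linearD)
  define nx where "nx = l2_normsq x"
  have "nx \<noteq> 0"
    using l2_Cauchy_Schwarz[OF x Ax] neg complex_Re_le_cmod[of "l2_inner x (A x)"] unfolding nx_def by auto
  hence nx: "0 < nx" using l2_normsq_nonneg[OF x] unfolding nx_def by simp
  define d where "d = - Re (l2_inner x (A x)) / nx"
  define q where "q = (1 + d)\<^sup>2"
  have d: "0 < d" unfolding d_def using neg nx by (simp add: divide_neg_pos)
  hence q: "1 < q" unfolding q_def by (simp add: one_less_power)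
  have "Re (l2_inner x (compl_op A x)) = (1 + d) * nx"
    unfolding compl_op_def l2_inner_diff_right[OF x x Ax] l2_inner_self[OF x]
    using nx by (simp add: d_def nx_def algebra_simps)
  hence "((1 + d) * nx)\<^sup>2 \<le> nx * l2_normsq (compl_op A x)"
    using l2_Cauchy_Schwarz_Re[OF x Cx] unfolding nx_def by simp
  hence base: "q * nx \<le> l2_normsq (compl_op A x)" using nx by (simp add: q_def power2_eq_square mult_ac)
  obtain m where m: "1 / d\<^sup>2 < q ^ m" using real_arch_pow[OF q] by blast
  define z where "z = (compl_op A ^^ m) x"
  have "q * l2_normsq z \<le> l2_normsq (compl_op A z)"
    using selfadjoint_normsq_funpow_ratio[OF C x _ _ base[unfolded nx_def], of m] nx q
    unfolding z_def nx_def by simp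
  hence lower: "d\<^sup>2 * l2_normsq z \<le> l2_normsq (A z)"
    unfolding q_def using normsq_ge_of_compl_op[OF A _ less_imp_le[OF d]]
      funpow_in_l2[OF l2_linear_compl_op[OF lin] x] z_def by simp
  have "nx < (d\<^sup>2 * q ^ m) * nx" using m d nx by (simp add: field_simps)
  also have "\<dots> \<le> d\<^sup>2 * l2_normsq z"
    using selfadjoint_normsq_funpow_geometric[OF C x _ _ base[unfolded nx_def], of m] nx q
    unfolding z_def nx_def by (simp add: mult_left_mono mult.assoc)
  finally have "nx < l2_normsq (A z)" using lower by linarith
  thus ?thesis unfolding nx_def z_def by (rule that)
qed

lemma summable_normsq_funpow_compl_op_A_basis:
  assumes A: "l2_selfadjoint A" "l2_contraction A" and tr: "(\<lambda>i. A (basis_vec i) i) sums 1"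
    and V: "(\<lambda>i. A ((compl_op A ^^ Suc (m + m)) (basis_vec i)) i) sums V" "0 \<le> V"
  shows "summable (\<lambda>i. l2_normsq ((compl_op A ^^ m) (A (basis_vec i))))"
    and "(\<Sum>i. l2_normsq ((compl_op A ^^ m) (A (basis_vec i)))) \<le> 1"
proof -
  have lin: "l2_linear A" using A(1) by (rule l2_selfadjointD)
  define C where "C = compl_op A"
  have C: "l2_selfadjoint C" "l2_positive C" "l2_linear C"
    unfolding C_def using A l2_linear_compl_op[OF lin]
    by (simp_all add: l2_selfadjoint_compl_op l2_positive_compl_op)
  define e where "e i = basis_vec i" for i
  have e: "e i \<in> l2" for i unfolding e_def by (rule basis_vec_in_l2)
  have Ae: "A (e i) \<in> l2" for i using lin e by (rule l2_linearD)
  define s where "s i = Re (A (e i) i) - Re (A ((C ^^ Suc (m + m)) (e i)) i)" for i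
  have entry: "A ((C ^^ j) (A (e i))) i = l2_inner (A (e i)) ((C ^^ j) (A (e i)))" for i j
    using l2_selfadjointD(2)[OF A(1) e funpow_in_l2[OF C(3) Ae]] unfolding e_def
    by (simp add: l2_inner_basis_vec_left)
  have le: "l2_normsq ((C ^^ m) (A (e i))) \<le> s i" for i
  proof -
    have "l2_normsq ((C ^^ m) (A (e i))) = Re (A ((C ^^ (m + m)) (A (e i))) i)"
      unfolding entry l2_inner_funpow_add[OF C(1) Ae Ae] l2_inner_self[OF funpow_in_l2[OF C(3) Ae]]
      by simp
    also have "\<dots> \<le> (\<Sum>j<Suc (m + m). Re (A ((C ^^ j) (A (e i))) i))"
      using l2_positive_funpow[OF C(1,2)] Ae unfolding entry l2_positive_def less_eq_complex_def
      by (intro member_le_sum) auto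
    also have "\<dots> = s i"
      unfolding s_def C_def A_funpow_compl_op_telescope[OF lin e] by simp
    finally show ?thesis .
  qed
  have s: "s sums (1 - Re V)"
    unfolding s_def e_def C_def using tr V(1) by (intro sums_diff) (simp_all add: sums_complex_iff)
  have nn: "0 \<le> l2_normsq ((C ^^ m) (A (e i)))" for i
    using funpow_in_l2[OF C(3) Ae] by (rule l2_normsq_nonneg)
  have sm: "summable (\<lambda>i. l2_normsq ((C ^^ m) (A (e i))))"
    by (rule summable_comparison_test'[OF sums_summable[OF s]]) (use nn le in auto)
  thus "summable (\<lambda>i. l2_normsq ((compl_op A ^^ m) (A (basis_vec i))))"
    unfolding C_def e_def .
  have "(\<Sum>i. l2_normsq ((C ^^ m) (A (e i)))) \<le> 1 - Re V"
    using suminf_le[OF le sm sums_summable[OF s]] s by (simp add: sums_iff)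
  also have "\<dots> \<le> 1" using V(2) by (simp add: less_eq_complex_def)
  finally show "(\<Sum>i. l2_normsq ((compl_op A ^^ m) (A (basis_vec i)))) \<le> 1"
    unfolding C_def e_def .
qed

lemma normsq_A_funpow_compl_op_le:
  assumes A: "l2_selfadjoint A" and x: "x \<in> l2"
    and S: "summable (\<lambda>i. l2_normsq ((compl_op A ^^ m) (A (basis_vec i))))"
  shows "l2_normsq (A ((compl_op A ^^ m) x))
    \<le> l2_normsq x * (\<Sum>i. l2_normsq ((compl_op A ^^ m) (A (basis_vec i))))"
proof -
  have lin: "l2_linear A" using A by (rule l2_selfadjointD)
  have C: "l2_linear (compl_op A)" using lin by (rule l2_linear_compl_op)
  define z where "z = (compl_op A ^^ m) x"
  have z: "z \<in> l2" unfolding z_def using C x by (rule funpow_in_l2)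
  have "A z i = l2_inner ((compl_op A ^^ m) (A (basis_vec i))) x" for i
    using l2_selfadjointD(2)[OF A basis_vec_in_l2 z]
      l2_inner_A_funpow_compl_op[OF A basis_vec_in_l2 x, of i m, symmetric]
      l2_selfadjointD(2)[OF l2_selfadjoint_funpow[OF l2_selfadjoint_compl_op[OF A]]
        l2_linearD(1)[OF lin basis_vec_in_l2] x, of m i]
    unfolding z_def by (simp add: l2_inner_basis_vec_left)
  hence "(cmod (A z i))\<^sup>2 \<le> l2_normsq x * l2_normsq ((compl_op A ^^ m) (A (basis_vec i)))" for i
    using l2_Cauchy_Schwarz[OF funpow_in_l2[OF C l2_linearD(1)[OF lin basis_vec_in_l2]] x]
    by (simp add: mult.commute)
  hence "l2_normsq (A z) \<le> (\<Sum>i. l2_normsq x * l2_normsq ((compl_op A ^^ m) (A (basis_vec i))))"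
    unfolding l2_normsq_def[of "A z"] using l2_linearD(1)[OF lin z] summable_mult[OF S]
    by (intro suminf_le) (simp_all add: in_l2_iff)
  thus ?thesis unfolding z_def using S by (simp add: suminf_mult)
qed

lemma positive_if_traces_nonneg:
  assumes A: "l2_selfadjoint A" "l2_contraction A" and tr: "(\<lambda>i. A (basis_vec i) i) sums 1"
    and moments: "\<And>n. \<exists>V. (\<lambda>i. A ((compl_op A ^^ n) (basis_vec i)) i) sums V \<and> 0 \<le> V"
  shows "l2_positive A"
  unfolding l2_positive_def
proof (rule ballI, rule ccontr)
  fix x assume x: "x \<in> l2" and "\<not> 0 \<le> l2_inner x (A x)"
  hence "Re (l2_inner x (A x)) < 0" using l2_positive_Re[OF A(1) x] by simp
  then obtain m where big: "l2_normsq x < l2_normsq (A ((compl_op A ^^ m) x))"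
    using normsq_A_funpow_compl_op_unbounded[OF A(1) x] by blast
  obtain V where "(\<lambda>i. A ((compl_op A ^^ Suc (m + m)) (basis_vec i)) i) sums V" "0 \<le> V"
    using moments by blast
  note S = summable_normsq_funpow_compl_op_A_basis[OF A tr this]
  have "l2_normsq (A ((compl_op A ^^ m) x))
      \<le> l2_normsq x * (\<Sum>i. l2_normsq ((compl_op A ^^ m) (A (basis_vec i))))"
    using A(1) x S(1) by (rule normsq_A_funpow_compl_op_le)
  also have "\<dots> \<le> l2_normsq x" using mult_left_mono[OF S(2) l2_normsq_nonneg[OF x]] by simp
  finally show False using big by simp
qed

lemma matrix_op_density_operator:
  assumes HS: "(\<lambda>(i, j). (cmod (M i j))\<^sup>2) summable_on UNIV" "(\<Sum>\<^sub>\<infinity>(i, j). (cmod (M i j))\<^sup>2) \<le> 1"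
    and herm: "\<forall>i j. M i j = cnj (M j i)"
    and moments: "\<forall>n. \<exists>t :: nat \<Rightarrow> complex.
        (\<forall>k\<le>n. (\<lambda>i. pow_diag M (k + 1) i) sums t k) \<and>
        0 \<le> (\<Sum>k\<le>n. (-1) ^ k * of_nat (n choose k) * t k)"
    and trace: "(\<lambda>i. M i i) sums 1"
  shows "density_operator (matrix_op M)"
proof -
  define A where "A = matrix_op M"
  have sa: "l2_selfadjoint A"
    unfolding A_def using HS herm[rule_format] by (rule Hilbert_Schmidt_matrix_op_selfadjoint)
  have contr: "l2_contraction A" unfolding A_def using Hilbert_Schmidt_matrix_op(2)[OF HS] .
  have tr: "(\<lambda>i. A (basis_vec i) i) sums 1" unfolding A_def matrix_op_basis_vec using trace .
  have pd: "pow_diag M k i = (A ^^ k) (basis_vec i) i" for k i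
    unfolding A_def pow_diag_def l2_inner_basis_vec_left ..
  have "\<exists>V. (\<lambda>i. A ((compl_op A ^^ n) (basis_vec i)) i) sums V \<and> 0 \<le> V" for n
  proof -
    obtain t where t: "\<forall>k\<le>n. (\<lambda>i. pow_diag M (k + 1) i) sums t k"
      and nonneg: "0 \<le> (\<Sum>k\<le>n. (-1) ^ k * of_nat (n choose k) * t k)"
      using moments by blast
    show ?thesis using trace_alternating_binomial_sums[OF l2_selfadjointD(1)[OF sa] pd t] nonneg by blast
  qed
  hence "l2_positive A" by (rule positive_if_traces_nonneg[OF sa contr tr])
  thus ?thesis using sa tr unfolding A_def by (simp add: density_operator_iff)
qed

theorem theorem2p5:
  fixes M :: "nat \<Rightarrow> nat \<Rightarrow> complex"
  shows "represents_state M \<longleftrightarrow>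
    ((\<lambda>(i, j). (cmod (M i j))\<^sup>2) summable_on UNIV \<and>
       (\<Sum>\<^sub>\<infinity>(i, j). (cmod (M i j))\<^sup>2) \<le> 1) \<and>
    (\<forall>i j. M i j = cnj (M j i)) \<and>
    (\<forall>n::nat. \<exists>t :: nat \<Rightarrow> complex.
        (\<forall>k\<le>n. (\<lambda>i. pow_diag M (k + 1) i) sums t k) \<and>
        0 \<le> (\<Sum>k\<le>n. (-1) ^ k * of_nat (n choose k) * t k)) \<and>
    (\<lambda>i. M i i) sums 1"
    (is "_ \<longleftrightarrow> (?HS \<and> ?le) \<and> ?herm \<and> ?moments \<and> ?trace")
proof
  assume "represents_state M"
  then obtain A where D: "density_operator A"
    and M: "\<And>i j. l2_inner (basis_vec i) (A (basis_vec j)) = M i j"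
    unfolding represents_state_def by blast
  have ?trace using density_operatorD(4)[OF D] M[symmetric] by (simp add: l2_inner_basis_vec_left)
  thus "(?HS \<and> ?le) \<and> ?herm \<and> ?moments \<and> ?trace"
    using density_matrix_Hilbert_Schmidt[OF D M] density_matrix_hermitian[OF D M]
      density_matrix_moments[OF D M] by blast
next
  assume "(?HS \<and> ?le) \<and> ?herm \<and> ?moments \<and> ?trace"
  then show "represents_state M"
  proof (elim conjE)
    assume ?HS ?le ?herm ?moments ?trace
    hence "density_operator (matrix_op M)" by (rule matrix_op_density_operator)
    moreover have "l2_inner (basis_vec i) (matrix_op M (basis_vec j)) = M i j" for i j
      unfolding l2_inner_basis_vec_left matrix_op_basis_vec ..
    ultimately show "represents_state M" unfolding represents_state_def by blast
  qed
qed

end
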